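(* Let $E,m\ge1$ and consider the IEEE-754 floating-point format $\mathbb{F}^E_m=(1+E+m,\gamma,\phi)$ described in the context. For any distinct $b,b'\in\{0,1\}^{1+E+m}$ such that the set $\{\gamma(b),\gamma(b')\}$ is neither $\{0\}$ nor $\{\bot\}$, the following are equivalent: (i) $\phi^{-1}(b)<_{\mathrm{dict}}\phi^{-1}(b')$; (ii) $b<_{\mathbb{F}^E_m}b'$; (iii) $\gamma(b)<\gamma(b')$ in the order of the extended reals.
   Context: Extended reals: $\overline{\mathbb{R}}=\mathbb{R}\cup\{-\infty,+\infty,\bot\}$ with strict linear order $-\infty<x<x'<+\infty<\bot$ for reals $x<x'$ ($\bot$ is a special NaN value, the largest element). $<_{\mathrm{dict}}$ is the lexicographic order on bit strings of equal length. Floating-point value map $\gamma$ on strings $s\,e_E\ldots e_1\,f_1\ldots f_m$ with bias $b_E=2^{E-1}-1$ and $e=(e_E\ldots e_1)_2$: if $e=0$, $\gamma=(-1)^s(0.f_1\ldots f_m)_2\,2^{1-b_E}$; if $0<e<2^E-1$, $\gamma=(-1)^s(1.f_1\ldots f_m)_2\,2^{e-b_E}$; if $e=2^E-1$ and $f_1\ldots f_m=0^m$, $\gamma=(-1)^s\infty$; if $e=2^E-1$ and $f_1\ldots f_m\ne0^m$, $\gamma=\bot$. For $k\ge1$, the sign-magnitude map on $(k+1)$-bit strings is $\psi_k(0b_1\ldots b_k)=1\bar b_1\ldots\bar b_k$, $\psi_k(1b_1\ldots b_k)=0b_1\ldots b_k$ ($\bar b$ the complement bit). The bijection $\phi:\{0,1\}^{1+E+m}\to\{0,1\}^{1+E+m}$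 is: if $b\le_{\mathrm{dict}}1\,1^E0^m$, $\phi(b)=\psi_{E+m}(c)$ where $c$ is the $(1+E+m)$-bit binary representation of the integer $(b)_2+(2^m-1)$; otherwise $\phi(b)=b$. The order $<_{\mathbb{F}^E_m}$ on $\{0,1\}^{1+E+m}$ is defined by $b<_{\mathbb{F}^E_m}b'$ iff $\phi^{-1}(b)<_{\mathrm{dict}}\phi^{-1}(b')$. *)

theory Defs
  imports Complex_Main
begin

text \<open>Bit strings are boolean lists, most significant bit first (True = 1, False = 0).\<close>

text \<open>Extended reals with a special NaN value Bot, the largest element.\<close>
datatype xreal = NegInf | Fin real | PosInf | Bot

fun xless :: "xreal \<Rightarrow> xreal \<Rightarrow> bool" where
  "xless NegInf y = (y \<noteq> NegInf)"
| "xless (Fin x) y = (case y of NegInf \<Rightarrow> False | Fin y' \<Rightarrow> x < y' | PosInf \<Rightarrow> True | Bot \<Rightarrow> True)"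
| "xless PosInf y = (y = Bot)"
| "xless Bot y = False"

fun dict_less :: "bool list \<Rightarrow> bool list \<Rightarrow> bool" where
  "dict_less (x # xs) (y # ys) = ((\<not> x \<and> y) \<or> (x = y \<and> dict_less xs ys))"
| "dict_less _ _ = False"

definition dict_le :: "bool list \<Rightarrow> bool list \<Rightarrow> bool" where
  "dict_le b b' = (b = b' \<or> dict_less b b')"

fun bin_val :: "bool list \<Rightarrow> nat" where
  "bin_val [] = 0"
| "bin_val (x # xs) = (if x then 2 ^ length xs else 0) + bin_val xs"

fun bin_rep :: "nat \<Rightarrow> nat \<Rightarrow> bool list" where
  "bin_rep 0 k = []"
| "bin_rep (Suc n) k = (odd (k div 2 ^ n)) # bin_rep n k"

fun psi :: "bool list \<Rightarrow> bool list" where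
  "psi [] = []"
| "psi (s # bs) = (if s then False # bs else True # map Not bs)"

definition phi :: "nat \<Rightarrow> nat \<Rightarrow> bool list \<Rightarrow> bool list" where
  "phi E m b =
     (if dict_le b (True # replicate E True @ replicate m False)
      then psi (bin_rep (1 + E + m) (bin_val b + (2 ^ m - 1)))
      else b)"

definition phi_inv :: "nat \<Rightarrow> nat \<Rightarrow> bool list \<Rightarrow> bool list" where
  "phi_inv E m = inv_into {b. length b = 1 + E + m} (phi E m)"

definition gamma :: "nat \<Rightarrow> nat \<Rightarrow> bool list \<Rightarrow> xreal" where
  "gamma E m b =
     (let s = hd b; e = bin_val (take E (tl b)); fs = drop (1 + E) b; f = bin_val fs;
          bias = (2::int) ^ (E - 1) - 1; sgn = (if s then -1 else 1 :: real)
      in if e = 0 then Fin (sgn * (real f / 2 ^ m) * (2::real) powi (1 - bias))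
         else if e < 2 ^ E - 1 then Fin (sgn * (1 + real f / 2 ^ m) * (2::real) powi (int e - bias))
         else if f = 0 then (if s then NegInf else PosInf)
         else Bot)"

definition fp_less :: "nat \<Rightarrow> nat \<Rightarrow> bool list \<Rightarrow> bool list \<Rightarrow> bool" where
  "fp_less E m b b' = dict_less (phi_inv E m b) (phi_inv E m b')"

end

theory Submission
  imports Defs
begin

text \<open>
  Write a string as \<open>s # w\<close> with sign bit \<open>s\<close> and \<open>r = bin_val w\<close>. Away from
  NaNs, \<open>\<phi>\<^sup>-\<^sup>1 b\<close> read as a binary number is \<open>2\<^sup>E\<^sup>+\<^sup>m - 2\<^sup>m \<plusminus> r\<close>, plus 1 if
  \<open>\<not> s\<close>, because \<open>\<psi>\<close> converts offset binary to sign-magnitude; on NaNs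
  it is larger still. So \<open>b <\<^sub>F b'\<close> compares these ranks. Away from NaNs, \<open>\<gamma> b\<close>
  is a strictly increasing function of \<open>\<plusminus>r\<close>: for \<open>r = e 2\<^sup>m + f\<close> its magnitude is
  \<open>f\<close> (if \<open>e = 0\<close>) or \<open>(2\<^sup>m + f) 2\<^sup>e\<^sup>-\<^sup>1\<close> times the smallest subnormal,
  which increases strictly with \<open>r\<close>. Hence the two orders agree except on
  \<open>+0\<close> versus \<open>-0\<close> (distinct ranks, equal values) and on two NaNs.
\<close>

lemma length_bin_rep [simp]: "length (bin_rep n k) = n"
  by (induction n) auto

lemma bin_val_less_pow: "bin_val xs < 2 ^ length xs"
  by (induction xs) auto

lemma bin_val_append: "bin_val (xs @ ys) = bin_val xs * 2 ^ length ys + bin_val ys"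
  by (induction xs) (auto simp: power_add algebra_simps)

lemma bin_val_replicate_True: "bin_val (replicate k True) = 2 ^ k - 1"
  by (induction k) auto

lemma bin_val_replicate_False: "bin_val (replicate k False) = 0"
  by (induction k) auto

lemma bin_val_map_Not: "bin_val (map Not xs) = 2 ^ length xs - 1 - bin_val xs"
proof -
  have "bin_val (map Not xs) + bin_val xs + 1 = 2 ^ length xs"
    by (induction xs) auto
  then show ?thesis by simp
qed

lemma bin_val_bin_rep: "bin_val (bin_rep n k) = k mod 2 ^ n"
proof (induction n)
  case 0
  then show ?case by simp
next
  case (Suc n)
  have "k mod 2 ^ Suc n = 2 ^ n * (k div 2 ^ n mod 2) + k mod 2 ^ n"
    using mod_mult2_eq[of k "2 ^ n" 2] by (simp add: mult.commute)
  then show ?case using Suc by (auto simp: odd_iff_mod_2_eq_one)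
qed

lemma dict_less_iff_bin_val_less:
  "length xs = length ys \<Longrightarrow> dict_less xs ys \<longleftrightarrow> bin_val xs < bin_val ys"
proof (induction xs arbitrary: ys)
  case Nil
  then show ?case by simp
next
  case (Cons x xs)
  then obtain y ys' where "ys = y # ys'" "length ys' = length xs"
    by (cases ys) auto
  with Cons.IH show ?case
    using bin_val_less_pow[of xs] bin_val_less_pow[of ys'] by auto
qed

lemma bin_val_inj: "length xs = length ys \<Longrightarrow> bin_val xs = bin_val ys \<Longrightarrow> xs = ys"
proof (induction xs arbitrary: ys)
  case Nil
  then show ?case by simp
next
  case (Cons x xs)
  then obtain y ys' where ys: "ys = y # ys'" "length ys' = length xs"
    by (cases ys) auto
  with Cons.prems have "x = y"
    using bin_val_less_pow[of xs] bin_val_less_pow[of ys'] by (auto split: if_splits)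
  with Cons ys show ?case by auto
qed

lemma dict_le_iff_bin_val_le:
  "length xs = length ys \<Longrightarrow> dict_le xs ys \<longleftrightarrow> bin_val xs \<le> bin_val ys"
  using dict_less_iff_bin_val_less bin_val_inj by (fastforce simp: dict_le_def)

lemma nan_threshold_eq: "(2 ^ E - 1) * 2 ^ m = (2::nat) ^ (E + m) - 2 ^ m"
  by (simp add: power_add algebra_simps)

lemma of_nat_nan_threshold: "int ((2 ^ E - 1) * 2 ^ m) = (2 ^ E - 1) * 2 ^ m"
  by (simp add: of_nat_diff)

lemma int_le_nan_threshold: "r \<le> (2 ^ E - 1) * 2 ^ m \<Longrightarrow> int r \<le> (2 ^ E - 1) * 2 ^ m"
  by (metis of_nat_le_iff of_nat_nan_threshold)

lemma nan_threshold_pos: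
  assumes "1 \<le> E"
  shows "0 < ((2::int) ^ E - 1) * 2 ^ m"
proof -
  have "(2::int) ^ 1 \<le> 2 ^ E"
    using assms by (intro power_increasing) simp_all
  then show ?thesis
    by simp
qed

definition signed_int :: "bool \<Rightarrow> nat \<Rightarrow> int" where
  "signed_int s r = (if s then - int r else int r)"

lemma signed_int_0 [simp]: "signed_int s 0 = 0"
  by (simp add: signed_int_def)

text \<open>\<open>fp_rank E m b = bin_val (phi_inv E m b)\<close> (lemma \<open>bin_val_phi_inv\<close>);
  the equation for \<open>[]\<close> is junk.\<close>

fun fp_rank :: "nat \<Rightarrow> nat \<Rightarrow> bool list \<Rightarrow> int" where
  "fp_rank E m (s # w) =
     (if \<not> s then 2 ^ (E + m) + int (bin_val w) + 1 - 2 ^ m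
      else if bin_val w \<le> (2 ^ E - 1) * 2 ^ m then 2 ^ (E + m) - 2 ^ m - int (bin_val w)
      else 2 ^ (E + m) + int (bin_val w))"
| "fp_rank E m [] = 0"

lemma fp_rank_non_nan:
  "bin_val w \<le> (2 ^ E - 1) * 2 ^ m \<Longrightarrow>
    fp_rank E m (s # w) = 2 ^ (E + m) - 2 ^ m + signed_int s (bin_val w) + (if s then 0 else 1)"
  by (simp add: signed_int_def)

lemma fp_rank_psi_bin_rep:
  assumes "2 ^ m \<le> c + 1" and "c < 2 ^ (1 + E + m)"
  shows "fp_rank E m (psi (bin_rep (1 + E + m) c)) = int c + 1 - 2 ^ m"
proof (cases "2 ^ (E + m) \<le> c")
  case True
  then have "c mod 2 ^ (E + m) = c - 2 ^ (E + m)" and "odd (c div 2 ^ (E + m))"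
    using assms(2) by (auto simp: le_mod_geq le_div_geq div_if)
  moreover have "2 ^ m \<le> Suc c"
    using assms(1) by simp
  ultimately show ?thesis using True by (simp add: bin_val_bin_rep of_nat_diff)
next
  case False
  define r where "r = 2 ^ (E + m) - 1 - c"
  have "psi (bin_rep (1 + E + m) c) = True # map Not (bin_rep (E + m) c)"
    using False by simp
  moreover have "bin_val (map Not (bin_rep (E + m) c)) = r"
    using False by (simp add: bin_val_map_Not bin_val_bin_rep r_def)
  moreover have "r \<le> (2 ^ E - 1) * 2 ^ m"
    unfolding nan_threshold_eq r_def using assms(1) by arith
  moreover have "int r = 2 ^ (E + m) - 1 - int c"
    using False by (simp add: r_def of_nat_diff)
  ultimately show ?thesis by simp
qed

lemma fp_rank_phi:
  assumes "length x = 1 + E + m"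
  shows "fp_rank E m (phi E m x) = bin_val x"
proof -
  define T where "T = True # replicate E True @ replicate m False"
  have "length T = length x" and "bin_val T = 2 ^ (E + m) + (2 ^ E - 1) * 2 ^ m"
    using assms by (simp_all add: T_def bin_val_append bin_val_replicate_True bin_val_replicate_False)
  then have dict_le_T: "dict_le x T \<longleftrightarrow> bin_val x \<le> 2 ^ (E + m) + (2 ^ E - 1) * 2 ^ m"
    by (simp add: dict_le_iff_bin_val_le)
  show ?thesis
  proof (cases "dict_le x T")
    case True
    moreover have "(1::nat) \<le> 2 ^ m" and "2 ^ m \<le> (2::nat) ^ (E + m)"
      and "(2::nat) ^ (1 + E + m) = 2 * 2 ^ (E + m)"
      by simp_all
    ultimately have "bin_val x + (2 ^ m - 1) < 2 ^ (1 + E + m)"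
      unfolding dict_le_T nan_threshold_eq by arith
    then have "fp_rank E m (psi (bin_rep (1 + E + m) (bin_val x + (2 ^ m - 1))))
        = int (bin_val x + (2 ^ m - 1)) + 1 - 2 ^ m"
      by (intro fp_rank_psi_bin_rep) simp_all
    moreover have "int (bin_val x + (2 ^ m - 1)) = int (bin_val x) + 2 ^ m - 1"
      using one_le_power[of "2::nat" m] by (simp only: of_nat_add of_nat_diff) simp
    ultimately show ?thesis
      using True unfolding phi_def T_def by simp
  next
    case False
    obtain s w where x: "x = s # w" and "length w = E + m"
      using assms by (cases x) auto
    moreover have "bin_val w < 2 ^ (E + m)"
      using bin_val_less_pow[of w] \<open>length w = E + m\<close> by simp
    ultimately have "s" and "(2 ^ E - 1) * 2 ^ m < bin_val w"
      using False unfolding dict_le_T by (auto split: if_splits)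
    with False x \<open>length w = E + m\<close> show ?thesis by (simp add: phi_def T_def)
  qed
qed

lemma length_phi: "length x = 1 + E + m \<Longrightarrow> length (phi E m x) = 1 + E + m"
  by (simp add: phi_def)

lemma bij_betw_phi:
  "bij_betw (phi E m) {b. length b = 1 + E + m} {b. length b = 1 + E + m}"
proof -
  have "inj_on (phi E m) {b. length b = 1 + E + m}"
    by (rule inj_onI) (metis (mono_tags) bin_val_inj fp_rank_phi mem_Collect_eq of_nat_eq_iff)
  moreover have "finite {b :: bool list. length b = 1 + E + m}"
    using finite_lists_length_eq[of "UNIV :: bool set"] by simp
  ultimately show ?thesis
    using length_phi by (intro bij_betw_imageI endo_inj_surj) auto
qed

lemma
  assumes "length b = 1 + E + m"
  shows length_phi_inv: "length (phi_inv E m b) = 1 + E + m"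
    and phi_phi_inv: "phi E m (phi_inv E m b) = b"
proof -
  have b: "b \<in> phi E m ` {b. length b = 1 + E + m}"
    using assms bij_betw_phi[of E m] by (simp add: bij_betw_def)
  show "length (phi_inv E m b) = 1 + E + m"
    using inv_into_into[OF b] by (simp add: phi_inv_def)
  show "phi E m (phi_inv E m b) = b"
    using f_inv_into_f[OF b] by (simp add: phi_inv_def)
qed

lemma bin_val_phi_inv:
  "length b = 1 + E + m \<Longrightarrow> bin_val (phi_inv E m b) = fp_rank E m b"
  using fp_rank_phi[OF length_phi_inv] phi_phi_inv by metis

lemma fp_less_iff_fp_rank_less:
  assumes "length b = 1 + E + m" and "length b' = 1 + E + m"
  shows "fp_less E m b b' \<longleftrightarrow> fp_rank E m b < fp_rank E m b'"
  using assms by (simp add: fp_less_def dict_less_iff_bin_val_less length_phi_inv flip: bin_val_phi_inv)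

text \<open>For \<open>r = e 2\<^sup>m + f\<close> with \<open>f < 2\<^sup>m\<close>, the magnitude of the float with exponent
  field \<open>e\<close> and fraction field \<open>f\<close>, in units of the smallest subnormal.\<close>

definition scaled_magnitude :: "nat \<Rightarrow> nat \<Rightarrow> nat" where
  "scaled_magnitude m r =
     (if r div 2 ^ m = 0 then r mod 2 ^ m else (2 ^ m + r mod 2 ^ m) * 2 ^ (r div 2 ^ m - 1))"

lemma scaled_magnitude_less: "scaled_magnitude m r < 2 ^ m * 2 ^ (r div 2 ^ m)"
proof (cases "r div 2 ^ m")
  case 0
  then show ?thesis by (simp add: scaled_magnitude_def)
next
  case (Suc k)
  have "(2 ^ m + r mod 2 ^ m) * 2 ^ k < (2 ^ m + 2 ^ m) * (2::nat) ^ k"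
    by simp
  with Suc show ?thesis by (simp add: scaled_magnitude_def)
qed

lemma strict_mono_scaled_magnitude: "strict_mono (scaled_magnitude m)"
proof (rule strict_monoI)
  fix r r' :: nat
  assume "r < r'"
  then have "r div 2 ^ m \<le> r' div 2 ^ m"
    by (simp add: div_le_mono)
  then consider "r div 2 ^ m = r' div 2 ^ m" | "r div 2 ^ m < r' div 2 ^ m"
    by linarith
  then show "scaled_magnitude m r < scaled_magnitude m r'"
  proof cases
    case 1
    with \<open>r < r'\<close> have "r mod 2 ^ m < r' mod 2 ^ m"
      by (metis div_mult_mod_eq add_less_cancel_left)
    with 1 show ?thesis by (simp add: scaled_magnitude_def)
  next
    case 2
    have "scaled_magnitude m r < 2 ^ m * 2 ^ (r div 2 ^ m)"
      by (rule scaled_magnitude_less)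
    also have "\<dots> \<le> 2 ^ m * 2 ^ (r' div 2 ^ m - 1)"
      using 2 by simp
    also have "\<dots> \<le> scaled_magnitude m r'"
      using 2 by (simp add: scaled_magnitude_def)
    finally show ?thesis .
  qed
qed

lemma scaled_magnitude_0 [simp]: "scaled_magnitude m 0 = 0"
  by (simp add: scaled_magnitude_def)

definition signed_magnitude :: "nat \<Rightarrow> int \<Rightarrow> real" where
  "signed_magnitude m t =
     (if t < 0 then - real (scaled_magnitude m (nat (- t))) else real (scaled_magnitude m (nat t)))"

lemma strict_mono_signed_magnitude: "strict_mono (signed_magnitude m)"
proof (rule strict_monoI)
  fix t t' :: int
  assume "t < t'"
  have "scaled_magnitude m (nat t) < scaled_magnitude m (nat t')" if "0 \<le> t"
    using that \<open>t < t'\<close> strict_mono_scaled_magnitude by (simp add: strict_mono_less)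
  moreover have "scaled_magnitude m (nat (- t')) < scaled_magnitude m (nat (- t))" if "t' < 0"
    using that \<open>t < t'\<close> strict_mono_scaled_magnitude by (simp add: strict_mono_less)
  moreover have "0 < scaled_magnitude m (nat (- t))" if "t < 0"
    using that strict_mono_scaled_magnitude[of m] strict_monoD[of "scaled_magnitude m" 0 "nat (- t)"]
    by simp
  ultimately show "signed_magnitude m t < signed_magnitude m t'"
    using \<open>t < t'\<close> by (auto simp: signed_magnitude_def)
qed

lemma signed_magnitude_signed_int:
  "signed_magnitude m (signed_int s r) = (if s then -1 else 1) * real (scaled_magnitude m r)"
  by (cases "r = 0") (auto simp: signed_magnitude_def signed_int_def)

lemma finite_value_eq:
  assumes "f < 2 ^ m"
  shows "(if e = 0 then real f / 2 ^ m * (2::real) powi (1 - B)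
          else (1 + real f / 2 ^ m) * (2::real) powi (int e - B))
       = real (scaled_magnitude m (e * 2 ^ m + f)) * ((2::real) powi (1 - B) / 2 ^ m)"
proof (cases "e = 0")
  case True
  with assms show ?thesis
    by (simp add: scaled_magnitude_def)
next
  case False
  have "int e - B = int (e - 1) + (1 - B)"
    using False by simp
  then have "(2::real) powi (int e - B) = 2 powi int (e - 1) * 2 powi (1 - B)"
    by (metis power_int_add zero_neq_numeral)
  then have "(2::real) powi (int e - B) = 2 ^ (e - 1) * 2 powi (1 - B)"
    by (simp only: power_int_of_nat)
  with False assms show ?thesis
    by (simp add: scaled_magnitude_def field_simps)
qed

definition min_subnormal :: "nat \<Rightarrow> nat \<Rightarrow> real" where
  "min_subnormal E m = (2::real) powi (1 - ((2::int) ^ (E - 1) - 1)) / 2 ^ m"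

definition signed_fp_value :: "nat \<Rightarrow> nat \<Rightarrow> int \<Rightarrow> xreal" where
  "signed_fp_value E m t =
     (if (2 ^ E - 1) * 2 ^ m \<le> t then PosInf
      else if t \<le> - ((2 ^ E - 1) * 2 ^ m) then NegInf
      else Fin (signed_magnitude m t * min_subnormal E m))"

lemma signed_fp_value_less:
  assumes "- ((2 ^ E - 1) * 2 ^ m) \<le> t" and "t < t'" and "t' \<le> (2 ^ E - 1) * 2 ^ m"
  shows "xless (signed_fp_value E m t) (signed_fp_value E m t')"
proof -
  have "0 < min_subnormal E m"
    by (simp add: min_subnormal_def)
  with assms strict_mono_signed_magnitude[of m] show ?thesis
    by (auto simp: signed_fp_value_def strict_mono_less)
qed

lemma signed_fp_value_0:
  assumes "1 \<le> E"
  shows "signed_fp_value E m 0 = Fin 0"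
  using nan_threshold_pos[OF assms, of m] by (simp add: signed_fp_value_def signed_magnitude_def)

lemma signed_fp_value_not_Bot: "signed_fp_value E m t \<noteq> Bot"
  by (simp add: signed_fp_value_def)

lemma gamma_Cons:
  assumes "1 \<le> E" and "length w = E + m"
  shows "gamma E m (s # w) =
    (if (2 ^ E - 1) * 2 ^ m < bin_val w then Bot
     else signed_fp_value E m (signed_int s (bin_val w)))"
proof -
  define r e f where "r = bin_val w" and "e = bin_val (take E w)" and "f = bin_val (drop E w)"
  define sg :: real where "sg = (if s then -1 else 1)"
  have r: "r = e * 2 ^ m + f"
    using assms(2) bin_val_append[of "take E w" "drop E w"] by (simp add: r_def e_def f_def)
  have "f < 2 ^ m" and "e < 2 ^ E"
    using assms(2) bin_val_less_pow[of "drop E w"] bin_val_less_pow[of "take E w"]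
    by (simp_all add: e_def f_def)
  have "2 ^ 1 \<le> (2::nat) ^ E"
    using assms(1) by (intro power_increasing) simp_all
  then have "1 \<le> (2::nat) ^ E - 1"
    by simp
  have gamma: "gamma E m (s # w) =
     (if e = 0 then Fin (sg * (real f / 2 ^ m) * (2::real) powi (1 - (2 ^ (E - 1) - 1)))
      else if e < 2 ^ E - 1
        then Fin (sg * (1 + real f / 2 ^ m) * (2::real) powi (int e - (2 ^ (E - 1) - 1)))
      else if f = 0 then (if s then NegInf else PosInf) else Bot)"
    by (simp add: gamma_def Let_def e_def f_def sg_def)
  consider (finite) "e < 2 ^ E - 1" | (infinite) "e = 2 ^ E - 1" "f = 0" | (nan) "e = 2 ^ E - 1" "0 < f"
    using \<open>e < 2 ^ E\<close> by linarith
  then show ?thesis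
  proof cases
    case finite
    have "r < (e + 1) * 2 ^ m"
      using r \<open>f < 2 ^ m\<close> by simp
    also have "\<dots> \<le> (2 ^ E - 1) * 2 ^ m"
      using finite by (intro mult_right_mono) simp_all
    finally have "r < (2 ^ E - 1) * 2 ^ m" .
    then have "int r < (2 ^ E - 1) * 2 ^ m"
      unfolding of_nat_nan_threshold[symmetric] of_nat_less_iff .
    then have "- ((2 ^ E - 1) * 2 ^ m) < signed_int s r" and "signed_int s r < (2 ^ E - 1) * 2 ^ m"
      unfolding signed_int_def by auto
    then have "signed_fp_value E m (signed_int s r)
        = Fin (sg * (real (scaled_magnitude m r) * min_subnormal E m))"
      unfolding signed_fp_value_def signed_magnitude_signed_int sg_def by simp
    moreover have "gamma E m (s # w) = Fin (sg * (real (scaled_magnitude m r) * min_subnormal E m))"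
      using gamma finite finite_value_eq[OF \<open>f < 2 ^ m\<close>, of e "2 ^ (E - 1) - 1"]
      unfolding r min_subnormal_def by (cases "e = 0") (simp_all add: mult.assoc)
    ultimately show ?thesis
      using \<open>r < (2 ^ E - 1) * 2 ^ m\<close> by (simp add: r_def)
  next
    case infinite
    then have "r = (2 ^ E - 1) * 2 ^ m"
      using r by simp
    moreover have "0 < ((2::int) ^ E - 1) * 2 ^ m"
      using assms(1) by (rule nan_threshold_pos)
    ultimately have "signed_fp_value E m (signed_int s r) = (if s then NegInf else PosInf)"
      by (simp add: signed_fp_value_def signed_int_def of_nat_nan_threshold)
    moreover have "gamma E m (s # w) = (if s then NegInf else PosInf)"
      using gamma infinite \<open>1 \<le> 2 ^ E - 1\<close> by simp
    ultimately show ?thesis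
      using \<open>r = (2 ^ E - 1) * 2 ^ m\<close> by (simp add: r_def)
  next
    case nan
    then have "(2 ^ E - 1) * 2 ^ m < r"
      using r by simp
    moreover have "gamma E m (s # w) = Bot"
      using gamma nan \<open>1 \<le> 2 ^ E - 1\<close> by simp
    ultimately show ?thesis
      by (simp add: r_def)
  qed
qed

lemma xless_asym: "xless x y \<Longrightarrow> \<not> xless y x"
  by (cases x; cases y) auto

lemma xless_Bot: "x \<noteq> Bot \<Longrightarrow> xless x Bot"
  by (cases x) auto

lemma fp_rank_non_nan_less_nan:
  assumes "bin_val w' \<le> (2 ^ E - 1) * 2 ^ m" and "(2 ^ E - 1) * 2 ^ m < bin_val w"
  shows "fp_rank E m (s' # w') < fp_rank E m (s # w)"
proof -
  have "fp_rank E m (s' # w') \<le> 2 ^ (E + m) - 2 ^ m + int (bin_val w') + 1"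
    using assms(1) by (auto simp: fp_rank_non_nan signed_int_def)
  moreover have "2 ^ (E + m) - 2 ^ m + int (bin_val w) + 1 \<le> fp_rank E m (s # w)"
    using assms(2) by simp
  moreover have "bin_val w' < bin_val w"
    using assms by simp
  ultimately show ?thesis
    by linarith
qed

lemma fp_rank_less_and_value_less:
  assumes "bin_val w \<le> (2 ^ E - 1) * 2 ^ m" and "bin_val w' \<le> (2 ^ E - 1) * 2 ^ m"
    and "signed_int s (bin_val w) < signed_int s' (bin_val w')"
  shows "fp_rank E m (s # w) < fp_rank E m (s' # w')
    \<and> xless (signed_fp_value E m (signed_int s (bin_val w)))
             (signed_fp_value E m (signed_int s' (bin_val w')))"
proof
  show "fp_rank E m (s # w) < fp_rank E m (s' # w')"
    using assms by (auto simp: fp_rank_non_nan signed_int_def)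
  show "xless (signed_fp_value E m (signed_int s (bin_val w)))
             (signed_fp_value E m (signed_int s' (bin_val w')))"
    using assms int_le_nan_threshold[OF assms(1)] int_le_nan_threshold[OF assms(2)]
    by (intro signed_fp_value_less) (auto simp: signed_int_def)
qed

lemma fp_rank_less_iff_value_less:
  assumes "1 \<le> E"
    and "bin_val w \<le> (2 ^ E - 1) * 2 ^ m" and "bin_val w' \<le> (2 ^ E - 1) * 2 ^ m"
    and "(s, bin_val w) \<noteq> (s', bin_val w')" and "bin_val w \<noteq> 0 \<or> bin_val w' \<noteq> 0"
  shows "fp_rank E m (s # w) < fp_rank E m (s' # w')
    \<longleftrightarrow> xless (signed_fp_value E m (signed_int s (bin_val w)))
              (signed_fp_value E m (signed_int s' (bin_val w')))"
proof -
  have "signed_int s (bin_val w) \<noteq> signed_int s' (bin_val w')"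
    using assms(4,5) by (auto simp: signed_int_def)
  then consider "signed_int s (bin_val w) < signed_int s' (bin_val w')"
    | "signed_int s' (bin_val w') < signed_int s (bin_val w)"
    by linarith
  then show ?thesis
    using fp_rank_less_and_value_less[of w E m w' s s'] fp_rank_less_and_value_less[of w' E m w s' s]
      assms(2,3) xless_asym by cases auto
qed

lemma fp_rank_less_iff_gamma_less:
  assumes "1 \<le> E" and "length w = E + m" and "length w' = E + m"
    and "s # w \<noteq> s' # w'"
    and "{gamma E m (s # w), gamma E m (s' # w')} \<noteq> {Fin 0}"
    and "{gamma E m (s # w), gamma E m (s' # w')} \<noteq> {Bot}"
  shows "fp_rank E m (s # w) < fp_rank E m (s' # w')
    \<longleftrightarrow> xless (gamma E m (s # w)) (gamma E m (s' # w'))"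
proof -
  let ?R = "(2 ^ E - 1) * 2 ^ m"
  note gamma = gamma_Cons[OF assms(1,2), of s] gamma_Cons[OF assms(1,3), of s']
  consider (nan) "?R < bin_val w" "bin_val w' \<le> ?R"
    | (nan') "bin_val w \<le> ?R" "?R < bin_val w'"
    | (non_nan) "bin_val w \<le> ?R" "bin_val w' \<le> ?R"
    using assms(6) gamma by fastforce
  then show ?thesis
  proof cases
    case nan
    then have "fp_rank E m (s' # w') < fp_rank E m (s # w)"
      by (intro fp_rank_non_nan_less_nan)
    moreover have "gamma E m (s # w) = Bot"
      using gamma nan by simp
    ultimately show ?thesis
      by simp
  next
    case nan'
    then have "fp_rank E m (s # w) < fp_rank E m (s' # w')"
      by (intro fp_rank_non_nan_less_nan)
    moreover have "gamma E m (s' # w') = Bot" and "gamma E m (s # w) \<noteq> Bot"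
      using gamma nan' signed_fp_value_not_Bot by simp_all
    ultimately show ?thesis
      by (simp add: xless_Bot)
  next
    case non_nan
    moreover have "(s, bin_val w) \<noteq> (s', bin_val w')"
      using assms(2-4) bin_val_inj[of w w'] by auto
    moreover have "bin_val w \<noteq> 0 \<or> bin_val w' \<noteq> 0"
    proof (rule ccontr)
      assume "\<not> (bin_val w \<noteq> 0 \<or> bin_val w' \<noteq> 0)"
      then have "gamma E m (s # w) = Fin 0" and "gamma E m (s' # w') = Fin 0"
        using gamma signed_fp_value_0[OF assms(1)] by simp_all
      with assms(5) show False
        by simp
    qed
    ultimately show ?thesis
      using fp_rank_less_iff_value_less[OF assms(1)] gamma by simp
  qed
qed

theorem proposition5p8:
  fixes E m :: nat and b b' :: "bool list"
  assumes "E \<ge> 1" and "m \<ge> 1"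
    and "length b = 1 + E + m" and "length b' = 1 + E + m"
    and "b \<noteq> b'"
    and "{gamma E m b, gamma E m b'} \<noteq> {Fin 0}"
    and "{gamma E m b, gamma E m b'} \<noteq> {Bot}"
  shows "(dict_less (phi_inv E m b) (phi_inv E m b') \<longleftrightarrow> fp_less E m b b')
       \<and> (fp_less E m b b' \<longleftrightarrow> xless (gamma E m b) (gamma E m b'))"
proof -
  obtain s w s' w' where "b = s # w" "length w = E + m" and "b' = s' # w'" "length w' = E + m"
    using assms(3,4) by (cases b; cases b') auto
  then have "fp_rank E m b < fp_rank E m b' \<longleftrightarrow> xless (gamma E m b) (gamma E m b')"
    using fp_rank_less_iff_gamma_less[OF assms(1)] assms(5-7) by simp
  then show ?thesis
    using fp_less_iff_fp_rank_less[OF assms(3,4)] by (simp add: fp_less_def)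
qed

end
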